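(* Let $\mathbf{A}$ be a finite idempotent algebra, $B$ a subuniverse of $\mathbf{A}$, and $C,D\subseteq A$. Then $(C,D)$ is a $B$-blocker of $\mathbf{A}$ if and only if: (1) $D$ is a subuniverse of $\mathbf{A}$; (2) $\emptyset\neq C\subseteq D$; (3) $C\cap B=\emptyset$; (4) $D\cap B\neq\emptyset$; and (5') for each basic operation $t$ of $\mathbf{A}$, of arity $s$ say, there is an index $i\in\{1,\dots,s\}$ such that $t(d_1,\dots,d_s)\in C$ whenever $d_j\in D$ for all $j$ and $d_i\in C$.
   Context: $B$-blocker: a pair $(C,D)$ of subsets of $A$ such that (1) $D$ is a subuniverse of $\mathbf{A}$; (2) $\emptyset\neq C\subseteq D$; (3) $C\cap B=\emptyset$; (4) $D\cap B\neq\emptyset$; (5) for every $n\ge 1$, $D^n\setminus (D\setminus C)^n$ is a subuniverse of $\mathbf{A}^n$. An algebra is idempotent if every basic operation $f$ satisfies $f(x,\dots,x)\approx x$. *)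

theory Defs
  imports Main
begin

definition algebra :: "'a set \<Rightarrow> 'f set \<Rightarrow> ('f \<Rightarrow> nat) \<Rightarrow> ('f \<Rightarrow> 'a list \<Rightarrow> 'a) \<Rightarrow> bool" where
  "algebra A F ar op \<longleftrightarrow>
     (\<forall>f\<in>F. \<forall>xs. length xs = ar f \<and> set xs \<subseteq> A \<longrightarrow> op f xs \<in> A)"

definition idempotent :: "'a set \<Rightarrow> 'f set \<Rightarrow> ('f \<Rightarrow> nat) \<Rightarrow> ('f \<Rightarrow> 'a list \<Rightarrow> 'a) \<Rightarrow> bool" where
  "idempotent A F ar op \<longleftrightarrow> (\<forall>f\<in>F. \<forall>x\<in>A. op f (replicate (ar f) x) = x)"

definition subuniverse :: "'a set \<Rightarrow> 'f set \<Rightarrow> ('f \<Rightarrow> nat) \<Rightarrow> ('f \<Rightarrow> 'a list \<Rightarrow> 'a) \<Rightarrow> 'a set \<Rightarrow> bool" where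
  "subuniverse A F ar op S \<longleftrightarrow> S \<subseteq> A \<and>
     (\<forall>f\<in>F. \<forall>xs. length xs = ar f \<and> set xs \<subseteq> S \<longrightarrow> op f xs \<in> S)"

definition tuples :: "nat \<Rightarrow> 'a set \<Rightarrow> 'a list set" where
  "tuples n X = {xs. length xs = n \<and> set xs \<subseteq> X}"

definition power_op :: "nat \<Rightarrow> ('f \<Rightarrow> 'a list \<Rightarrow> 'a) \<Rightarrow> 'f \<Rightarrow> 'a list list \<Rightarrow> 'a list" where
  "power_op n op f xss = map (\<lambda>k. op f (map (\<lambda>xs. xs ! k) xss)) [0..<n]"

definition blocker :: "'a set \<Rightarrow> 'f set \<Rightarrow> ('f \<Rightarrow> nat) \<Rightarrow> ('f \<Rightarrow> 'a list \<Rightarrow> 'a)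
    \<Rightarrow> 'a set \<Rightarrow> 'a set \<Rightarrow> 'a set \<Rightarrow> bool" where
  "blocker A F ar op B C D \<longleftrightarrow>
     subuniverse A F ar op D \<and> C \<noteq> {} \<and> C \<subseteq> D \<and> C \<inter> B = {} \<and> D \<inter> B \<noteq> {} \<and>
     (\<forall>n\<ge>1. subuniverse (tuples n A) F ar (power_op n op) (tuples n D - tuples n (D - C)))"

end

theory Submission
  imports Defs
begin

text \<open>If every operation t has a coordinate i in which C absorbs (inside D), then applying
t to tuples that each meet C meets C in the coordinate where the i-th argument does. Conversely,
if an operation f of arity s had no such coordinate, pick witnesses g_i with g_i(i) \<in> C but
f(g_i) \<notin> C; the s tuples formed by the columns of the matrix (g_i(j)) each meet C on the
diagonal, but f applied to them in A^s yields the tuple (f(g_1), ..., f(g_s)), which avoids C.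
Nullary operations are ruled out by idempotency, which would force A to be a single point
lying in both C and B.\<close>

lemma mem_tuples_diff_iff:
  "xs \<in> tuples n D - tuples n (D - C) \<longleftrightarrow>
     length xs = n \<and> set xs \<subseteq> D \<and> (\<exists>k<n. xs ! k \<in> C)"
  by (auto simp: tuples_def in_set_conv_nth) (metis Diff_iff nth_mem subsetD)

lemma length_power_op [simp]: "length (power_op n op f xss) = n"
  by (simp add: power_op_def)

lemma nth_power_op [simp]:
  "k < n \<Longrightarrow> power_op n op f xss ! k = op f (map (\<lambda>xs. xs ! k) xss)"
  by (simp add: power_op_def)

lemma absorbing_coordinates_imp_power_subuniverse:
  assumes D: "subuniverse A F ar op D"
    and absorbing: "\<forall>f\<in>F. \<exists>i<ar f. \<forall>ds. length ds = ar f \<and> set ds \<subseteq> D \<and> ds ! i \<in> C \<longrightarrow> op f ds \<in> C"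
  shows "subuniverse (tuples n A) F ar (power_op n op) (tuples n D - tuples n (D - C))"
  unfolding subuniverse_def
proof (intro conjI ballI allI impI)
  show "tuples n D - tuples n (D - C) \<subseteq> tuples n A"
    using D by (auto simp: subuniverse_def tuples_def)
next
  fix f xss
  assume f: "f \<in> F" and xss: "length xss = ar f \<and> set xss \<subseteq> tuples n D - tuples n (D - C)"
  have column_in_D: "set (map (\<lambda>xs. xs ! k) xss) \<subseteq> D" if "k < n" for k
  proof
    fix y assume "y \<in> set (map (\<lambda>xs. xs ! k) xss)"
    then obtain xs where "xs \<in> set xss" "y = xs ! k"
      by auto
    with xss have "xs \<in> tuples n D - tuples n (D - C)" "y = xs ! k"
      by auto
    then have "length xs = n" "set xs \<subseteq> D" "y = xs ! k"
      unfolding mem_tuples_diff_iff by auto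
    with \<open>k < n\<close> show "y \<in> D"
      by auto
  qed
  obtain i where i: "i < ar f"
    and absorbs: "\<forall>ds. length ds = ar f \<and> set ds \<subseteq> D \<and> ds ! i \<in> C \<longrightarrow> op f ds \<in> C"
    using absorbing f by blast
  have "xss ! i \<in> set xss"
    using xss i by simp
  with xss have "xss ! i \<in> tuples n D - tuples n (D - C)"
    by blast
  then obtain k where k: "k < n" "xss ! i ! k \<in> C"
    unfolding mem_tuples_diff_iff by blast
  have "op f (map (\<lambda>xs. xs ! k) xss) \<in> C"
    using absorbs column_in_D[OF k(1)] xss i k(2) by simp
  moreover have "set (power_op n op f xss) \<subseteq> D"
    using D f xss column_in_D by (auto simp: subuniverse_def in_set_conv_nth)
  ultimately show "power_op n op f xss \<in> tuples n D - tuples n (D - C)"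
    unfolding mem_tuples_diff_iff using k(1) by auto
qed

lemma power_subuniverse_diagonal:
  assumes P: "subuniverse (tuples s A) F ar (power_op s op) (tuples s D - tuples s (D - C))"
    and f: "f \<in> F" "ar f = s"
    and g: "\<And>i. i < s \<Longrightarrow> length (g i) = s \<and> set (g i) \<subseteq> D \<and> g i ! i \<in> C"
  shows "\<exists>k<s. op f (g k) \<in> C"
proof -
  define xss where "xss = map (\<lambda>j. map (\<lambda>k. g k ! j) [0..<s]) [0..<s]"
  have column: "map (\<lambda>xs. xs ! k) xss = g k" if "k < s" for k
    using g[OF that] map_nth[of "g k"] that by (simp add: xss_def comp_def)
  have "set xss \<subseteq> tuples s D - tuples s (D - C)"
  proof
    fix xs assume "xs \<in> set xss"
    then obtain j where j: "j < s" and xs: "xs = map (\<lambda>k. g k ! j) [0..<s]"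
      by (auto simp: xss_def)
    have "set xs \<subseteq> D"
      using g j by (auto simp: xs) (metis nth_mem subsetD)
    moreover have "xs ! j \<in> C"
      using g j by (simp add: xs)
    ultimately show "xs \<in> tuples s D - tuples s (D - C)"
      unfolding mem_tuples_diff_iff using j by (auto simp: xs)
  qed
  moreover have "length xss = ar f"
    using f by (simp add: xss_def)
  ultimately have "power_op s op f xss \<in> tuples s D - tuples s (D - C)"
    using P f by (simp add: subuniverse_def)
  then obtain k where "k < s" "power_op s op f xss ! k \<in> C"
    unfolding mem_tuples_diff_iff by blast
  then show ?thesis
    using column by auto
qed

lemma power_subuniverse_imp_absorbing_coordinate:
  assumes P: "subuniverse (tuples (ar f) A) F ar (power_op (ar f) op) (tuples (ar f) D - tuples (ar f) (D - C))"
    and f: "f \<in> F"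
  shows "\<exists>i<ar f. \<forall>ds. length ds = ar f \<and> set ds \<subseteq> D \<and> ds ! i \<in> C \<longrightarrow> op f ds \<in> C"
proof (rule ccontr)
  assume "\<not> ?thesis"
  then obtain g where g: "\<And>i. i < ar f \<Longrightarrow>
      length (g i) = ar f \<and> set (g i) \<subseteq> D \<and> g i ! i \<in> C \<and> op f (g i) \<notin> C"
    by metis
  then show False
    using power_subuniverse_diagonal[OF P f refl, of g] by blast
qed

lemma idempotent_arity_pos:
  assumes "idempotent A F ar op" "f \<in> F" "x \<in> A" "y \<in> A" "x \<noteq> y"
  shows "ar f \<ge> 1"
  using assms unfolding idempotent_def by (metis less_one not_le replicate_0)

theorem lemma4p6:
  fixes A :: "'a set" and F :: "'f set" and ar :: "'f \<Rightarrow> nat"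
    and op :: "'f \<Rightarrow> 'a list \<Rightarrow> 'a" and B C D :: "'a set"
  assumes "algebra A F ar op" and "finite A" and "idempotent A F ar op"
    and "subuniverse A F ar op B" and "C \<subseteq> A" and "D \<subseteq> A"
  shows "blocker A F ar op B C D \<longleftrightarrow>
     (subuniverse A F ar op D \<and> C \<noteq> {} \<and> C \<subseteq> D \<and> C \<inter> B = {} \<and> D \<inter> B \<noteq> {} \<and>
      (\<forall>f\<in>F. \<exists>i<ar f. \<forall>ds. length ds = ar f \<and> set ds \<subseteq> D \<and> ds ! i \<in> C \<longrightarrow> op f ds \<in> C))"
    (is "_ \<longleftrightarrow> ?characterization")
proof
  assume "blocker A F ar op B C D"
  then have basic: "subuniverse A F ar op D" "C \<noteq> {}" "C \<subseteq> D" "C \<inter> B = {}" "D \<inter> B \<noteq> {}"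
    and power: "\<And>n. n \<ge> 1 \<Longrightarrow>
      subuniverse (tuples n A) F ar (power_op n op) (tuples n D - tuples n (D - C))"
    by (auto simp: blocker_def)
  then obtain c b where "c \<in> C" "b \<in> D" "c \<noteq> b"
    by blast
  then have "ar f \<ge> 1" if "f \<in> F" for f
    using idempotent_arity_pos[OF assms(3) that] assms(5,6) by blast
  then show ?characterization
    using basic power_subuniverse_imp_absorbing_coordinate[OF power] by blast
next
  assume ?characterization
  then show "blocker A F ar op B C D"
    unfolding blocker_def using absorbing_coordinates_imp_power_subuniverse by blast
qed

end
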